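(* Let $A\in\mathbb{R}^{n\times d}$, $b\in\mathbb{R}^n$, and suppose $Ax=b$ admits a solution $x^*$; let $H$ be the set of solutions and $P_H$ the projection onto $H$. Let $x_0\in\mathbb{R}^d$ and $\mathrm{rrow}(A)=\mathrm{span}\lbrace A_{i,\cdot}:A_{i,\cdot}'x_0\neq b_i\rbrace$. Generate $\lbrace w_k\rbrace,\lbrace x_k\rbrace$ by $w_k=\varphi(A,b,x_k)$ and $x_{k+1} = x_k + A'w_kw_k'(b-Ax_k)/\|A'w_k\|_2^2$, where $\varphi$ is any one of the following adaptive methods ($e_1,\ldots,e_n$ the standard basis of $\mathbb{R}^n$): (1) maximum residual: $\varphi(A,b,x)$ is the $e\in\lbrace e_1,\ldots,e_n\rbrace$ maximizing $|e'(Ax-b)|$; (2) maximum distance: $\varphi(A,b,x)$ is the $e\in\lbrace e_1,\ldots,e_n\rbrace$ maximizing $|e'(Ax-b)|/\|A'e\|_2^2$; (3) Greedy Randomized Kaczmarz: with threshold $\epsilon(x)=\frac12\big(\frac{1}{\|Ax-b\|_2^2}\max_{e\in\lbrace e_1,\ldots,e_n\rbrace}\frac{|e'(Ax-b)|^2}{\|A'e\|_2^2}+\frac{1}{\|A\|_F^2}\big)$, form the set of equations $i$ whose residual surpasses the threshold (i.e. $|e_i'(Ax-b)|^2\geq\epsilon(x)\|Ax-b\|_2^2\|A_{i,\cdot}\|_2^2$) and select $e_i$ from this set with probability proportional to $|e_i'(Ax-b)|^2$; (4) Sampling Kaczmarz–Motzkin: at each iteration, independently, select a random subset of $\psi$ of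 the equations (uniformly, without replacement), and then choose the $e_i$ with $i$ in this subset maximizing $|e_i'(Ax-b)|$. Then, for each of these methods, there exists $\gamma\in[0,1)$ and an increasing sequence of stopping times $\lbrace\tau_\ell:\ell\in\mathbb{N}\rbrace$ such that $\mathbb{P}[E_1\cup E_2]=1$, where $E_1=\bigcup_{\ell}\lbrace x_{\tau_\ell+1}\in H\rbrace$ and $E_2=\bigcap_\ell\lbrace\|x_{\tau_\ell+1}-P_H(x_0)\|_2^2\leq\gamma^\ell\|x_0-P_H(x_0)\|_2^2\rbrace$; on $E_1$, $\tau_\ell$ has finite expectation for $\ell$ with $x_{\tau_\ell+1}\in H$, and on $E_2$, $\tau_\ell$ has finite expectation for all $\ell$. Moreover, there exists a constant $\kappa$ such that for any finite $\tau_\ell$, $\mathbb{E}[\tau_\ell]\leq\ell\kappa$.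
   Context: $A_{i,\cdot}\in\mathbb{R}^d$ is the $i$-th row of $A$, $A'$ the transpose, $\|A\|_F$ the Frobenius norm. $P_H$ is the Euclidean projection onto the affine solution set $H$. *)

theory Defs
  imports "HOL-Analysis.Analysis" "HOL-Probability.Probability"
begin

text \<open>Rows are indexed by the finite type 'n (so n = CARD('n)), columns by 'd (d = CARD('d)).
  A :: real^'d^'n, so A $ i is the i-th row, transpose A is A', and axis i 1 is e_i.\<close>


definition sol_set :: "real^'d^'n \<Rightarrow> real^'n \<Rightarrow> (real^'d) set" where
  "sol_set A b = {x. A *v x = b}"

definition frob_sq :: "real^'d^'n \<Rightarrow> real" where
  "frob_sq A = (\<Sum>i\<in>UNIV. (norm (A $ i))\<^sup>2)"

text \<open>The iteration x_{k+1} = x_k + A' w w' (b - A x_k) / ||A' w||^2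
  (Isabelle convention: division by 0 gives 0).\<close>
definition kacz_step :: "real^'d^'n \<Rightarrow> real^'n \<Rightarrow> real^'d \<Rightarrow> real^'n \<Rightarrow> real^'d" where
  "kacz_step A b x w =
     x + ((w \<bullet> (b - A *v x)) / (norm (transpose A *v w))\<^sup>2) *\<^sub>R (transpose A *v w)"

definition grk_eps :: "real^'d^'n \<Rightarrow> real^'n \<Rightarrow> real^'d \<Rightarrow> real" where
  "grk_eps A b x =
     (1/2) * ((1 / (norm (A *v x - b))\<^sup>2) *
                (MAX j. \<bar>(A *v x - b) $ j\<bar>\<^sup>2 / (norm (A $ j))\<^sup>2)
              + 1 / frob_sq A)"

definition grk_set :: "real^'d^'n \<Rightarrow> real^'n \<Rightarrow> real^'d \<Rightarrow> 'n set" where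
  "grk_set A b x = {i. \<bar>(A *v x - b) $ i\<bar>\<^sup>2 \<ge>
                        grk_eps A b x * (norm (A *v x - b))\<^sup>2 * (norm (A $ i))\<^sup>2}"

definition grk_prob :: "real^'d^'n \<Rightarrow> real^'n \<Rightarrow> real^'d \<Rightarrow> 'n \<Rightarrow> real" where
  "grk_prob A b x i =
     (if i \<in> grk_set A b x
      then \<bar>(A *v x - b) $ i\<bar>\<^sup>2 / (\<Sum>j\<in>grk_set A b x. \<bar>(A *v x - b) $ j\<bar>\<^sup>2)
      else 0)"

datatype adaptive_method = MaxResidual | MaxDistance | GRK | SKM nat

definition enat_filt :: "'a measure \<Rightarrow> (nat \<Rightarrow> 'a measure) \<Rightarrow> enat \<Rightarrow> 'a measure" where
  "enat_filt M F t = (case t of enat k \<Rightarrow> F k | \<infinity> \<Rightarrow> M)"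

text \<open>(x_k, w_k) is a process generated by the adaptive method m from x0, on the probability
  space M with filtration F: x_k is F_k-measurable, w_k is F_{k+1}-measurable, w_k is a
  standard basis vector chosen according to the method (random choices are fresh given F_k),
  and x_{k+1} is given by the update.\<close>
definition generated_by ::
  "'a measure \<Rightarrow> (nat \<Rightarrow> 'a measure) \<Rightarrow> adaptive_method \<Rightarrow> real^'d^'n \<Rightarrow> real^'n \<Rightarrow> real^'d
   \<Rightarrow> (nat \<Rightarrow> 'a \<Rightarrow> real^'d) \<Rightarrow> (nat \<Rightarrow> 'a \<Rightarrow> real^'n) \<Rightarrow> bool" where
  "generated_by M F m A b x0 x w \<longleftrightarrow>
     prob_space M \<and> filtration (space M) F \<and> (\<forall>k. subalgebra M (F k)) \<and>
     (\<forall>\<omega>\<in>space M. x 0 \<omega> = x0) \<and>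
     (\<forall>k. \<forall>\<omega>\<in>space M. x (Suc k) \<omega> = kacz_step A b (x k \<omega>) (w k \<omega>)) \<and>
     (\<forall>k. x k \<in> borel_measurable (F k)) \<and>
     (\<forall>k. w k \<in> borel_measurable (F (Suc k))) \<and>
     (\<forall>k. \<forall>\<omega>\<in>space M. \<exists>i. w k \<omega> = axis i 1) \<and>
     (case m of
        MaxResidual \<Rightarrow>
          (\<forall>k. \<forall>\<omega>\<in>space M. \<exists>i. w k \<omega> = axis i 1 \<and>
              (\<forall>j. \<bar>(A *v x k \<omega> - b) $ j\<bar> \<le> \<bar>(A *v x k \<omega> - b) $ i\<bar>))
      | MaxDistance \<Rightarrow>
          (\<forall>k. \<forall>\<omega>\<in>space M. \<exists>i. w k \<omega> = axis i 1 \<and>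
              (\<forall>j. \<bar>(A *v x k \<omega> - b) $ j\<bar> / (norm (A $ j))\<^sup>2
                     \<le> \<bar>(A *v x k \<omega> - b) $ i\<bar> / (norm (A $ i))\<^sup>2))
      | GRK \<Rightarrow>
          (\<forall>k i. \<forall>B\<in>sets (F k).
              measure M ({\<omega>\<in>space M. w k \<omega> = axis i 1 \<and> A *v x k \<omega> \<noteq> b} \<inter> B)
              = (LINT \<omega>:B|M. (if A *v x k \<omega> \<noteq> b then grk_prob A b (x k \<omega>) i else 0)))
      | SKM \<psi> \<Rightarrow>
          1 \<le> \<psi> \<and> \<psi> \<le> CARD('n) \<and>
          (\<exists>S :: nat \<Rightarrow> 'a \<Rightarrow> 'n set.
             (\<forall>k T. {\<omega>\<in>space M. S k \<omega> = T} \<in> sets (F (Suc k))) \<and>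
             (\<forall>k T. \<forall>B\<in>sets (F k). card T = \<psi> \<longrightarrow>
                 measure M ({\<omega>\<in>space M. S k \<omega> = T} \<inter> B)
                 = measure M B / real (CARD('n) choose \<psi>)) \<and>
             (\<forall>k. \<forall>\<omega>\<in>space M. \<exists>i\<in>S k \<omega>. w k \<omega> = axis i 1 \<and>
                 (\<forall>j\<in>S k \<omega>. \<bar>(A *v x k \<omega> - b) $ j\<bar> \<le> \<bar>(A *v x k \<omega> - b) $ i\<bar>))))"

end

theory Submission
  imports Defs
begin

text \<open>
  Let p be the projection of x0 onto H. Every iterate stays in p plus the row space of A, on
  which A is coercive: \<sigma> |v|^2 \<le> |A v|^2 for some \<sigma> > 0. A step along row i lowers the
  squared error e_k = |x_k - p|^2 by (A_i' (x_k - p))^2 / |A_i|^2, and each adaptive rule makes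
  this gain at least a fixed fraction of |A x_k - b|^2 \<ge> \<sigma> e_k: pointwise for the two greedy
  rules, almost surely for GRK, and in expectation for SKM, whose sample is independent of the
  past. Hence E e_(k+1) \<le> \<rho> E e_k with \<rho> < 1. Let \<tau>_l be the first time e_k drops below
  \<rho>^l e_0. By Markov's inequality P(\<tau>_l > t) \<le> \<rho>^(t-l), so E \<tau>_l \<le> l + 1/(1-\<rho>) and all \<tau>_l
  are almost surely finite; a run that reaches H has error 0 from then on, so it also belongs
  to the second event.
\<close>

section \<open>Geometry of a Kaczmarz step\<close>

definition kernel_perp :: "real^'d^'n \<Rightarrow> (real^'d) set" where
  "kernel_perp A = {v. \<forall>z. A *v z = 0 \<longrightarrow> orthogonal v z}"

lemma subspace_kernel_perp: "subspace (kernel_perp A)"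
  unfolding subspace_def kernel_perp_def orthogonal_def by (auto simp: inner_add_left)

lemma row_in_kernel_perp: "A $ i \<in> kernel_perp A"
  unfolding kernel_perp_def orthogonal_def by (simp add: matrix_vector_mul_component[symmetric])

lemma kernel_perp_coercive:
  fixes A :: "real^'d^'n"
  shows "\<exists>\<sigma>>0. \<forall>v\<in>kernel_perp A. \<sigma> * (norm v)\<^sup>2 \<le> (norm (A *v v))\<^sup>2"
proof -
  have "\<forall>v\<in>kernel_perp A. A *v v = 0 \<longrightarrow> v = 0"
    unfolding kernel_perp_def orthogonal_def by auto
  then obtain e where e: "e > 0" "\<forall>v\<in>kernel_perp A. e * norm v \<le> norm (A *v v)"
    using injective_imp_isometric[OF closed_subspace subspace_kernel_perp, of A "(*v) A"]
    by (auto simp: subspace_kernel_perp)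
  show ?thesis
  proof (intro exI[of _ "e\<^sup>2"] conjI ballI)
    fix v assume "v \<in> kernel_perp A"
    then have "(e * norm v)\<^sup>2 \<le> (norm (A *v v))\<^sup>2"
      using e by (intro power_mono) auto
    then show "e\<^sup>2 * (norm v)\<^sup>2 \<le> (norm (A *v v))\<^sup>2" by (simp add: power_mult_distrib)
  qed (use e in simp)
qed

lemma closed_sol_set: "closed (sol_set A b)"
  unfolding sol_set_def
  by (intro closed_Collect_eq continuous_on_const linear_continuous_on) auto

lemma convex_sol_set: "convex (sol_set A b)"
  unfolding sol_set_def convex_def
  by (simp add: matrix_vector_right_distrib matrix_vector_mult_scaleR scaleR_left_distrib[symmetric])

lemma closest_point_sol_set:
  fixes A :: "real^'d^'n" and x0 :: "real^'d"
  assumes "A *v y = b"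
  defines "p \<equiv> closest_point (sol_set A b) x0"
  shows "A *v p = b" and "x0 - p \<in> kernel_perp A"
proof -
  have "sol_set A b \<noteq> {}" using assms(1) unfolding sol_set_def by auto
  then have p: "p \<in> sol_set A b"
    unfolding p_def by (rule closest_point_in_set[OF closed_sol_set])
  then show "A *v p = b" unfolding sol_set_def by simp
  have "(x0 - p) \<bullet> z = 0" if z: "A *v z = 0" for z
  proof -
    have "p + z \<in> sol_set A b" "p - z \<in> sol_set A b" using p z
      by (auto simp: sol_set_def matrix_vector_right_distrib matrix_vector_mult_diff_distrib)
    from this[THEN closest_point_dot[OF convex_sol_set closed_sol_set], of x0]
    show ?thesis unfolding p_def[symmetric] by (simp add: inner_minus_right)
  qed
  then show "x0 - p \<in> kernel_perp A" unfolding kernel_perp_def orthogonal_def by blast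
qed

lemma norm_diff_projection_sq:
  fixes u v :: "'a::real_inner"
  shows "(norm (v - ((u \<bullet> v) / (norm u)\<^sup>2) *\<^sub>R u))\<^sup>2 = (norm v)\<^sup>2 - (u \<bullet> v)\<^sup>2 / (norm u)\<^sup>2"
proof (cases "u = 0")
  case False
  have expand: "(norm (v - t *\<^sub>R u))\<^sup>2 = (norm v)\<^sup>2 - 2 * t * (u \<bullet> v) + t\<^sup>2 * (norm u)\<^sup>2" for t
    unfolding power2_norm_eq_inner
    by (simp add: inner_diff_left inner_diff_right inner_commute algebra_simps power2_eq_square)
  show ?thesis unfolding expand using False by (simp add: field_simps power2_eq_square)
qed simp

lemma transpose_mult_axis: "transpose A *v axis i 1 = (A::real^'d^'n) $ i"
  by (simp add: matrix_vector_mult_basis column_def transpose_def vec_eq_iff)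

text \<open>A Kaczmarz step along row i is the orthogonal projection onto the hyperplane of
  equation i, seen from any solution p.\<close>
lemma kacz_step_axis_minus_solution:
  fixes A :: "real^'d^'n"
  assumes "A *v p = b"
  shows "kacz_step A b x (axis i 1) - p = (x - p) - ((A$i \<bullet> (x - p)) / (norm (A$i))\<^sup>2) *\<^sub>R A$i"
proof -
  have coeff: "axis i 1 \<bullet> (b - A *v x) = - (A$i \<bullet> (x - p))"
    using assms by (simp add: inner_axis' matrix_vector_mul_component[symmetric] inner_diff_right)
  have "x + (- c / n) *\<^sub>R a - p = (x - p) - (c / n) *\<^sub>R a" for c n :: real and a
    by (simp add: algebra_simps)
  then show ?thesis unfolding kacz_step_def transpose_mult_axis coeff .
qed

lemma norm_sq_eq_sum_components: "(norm (y::real^'n))\<^sup>2 = (\<Sum>j\<in>UNIV. (y$j)\<^sup>2)"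
  unfolding power2_norm_eq_inner inner_vec_def by (simp add: power2_eq_square)

lemma frob_sq_nonneg: "0 \<le> frob_sq A"
  unfolding frob_sq_def by (simp add: sum_nonneg)

lemma component_sq_le_norm_sq: "(y $ j)\<^sup>2 \<le> (norm (y::real^'n))\<^sup>2"
  unfolding norm_sq_eq_sum_components by (rule member_le_sum) auto

lemma norm_matrix_vector_sq_le: "(norm (A *v v))\<^sup>2 \<le> frob_sq A * (norm v)\<^sup>2"
proof -
  have "(norm (A *v v))\<^sup>2 = (\<Sum>j\<in>UNIV. (A$j \<bullet> v)\<^sup>2)"
    by (simp add: norm_sq_eq_sum_components matrix_vector_mul_component)
  also have "\<dots> \<le> (\<Sum>j\<in>UNIV. (norm (A$j))\<^sup>2 * (norm v)\<^sup>2)"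
  proof (intro sum_mono)
    fix j
    have "\<bar>A$j \<bullet> v\<bar> \<le> norm (A$j) * norm v" by (rule Cauchy_Schwarz_ineq2)
    then show "(A$j \<bullet> v)\<^sup>2 \<le> (norm (A$j))\<^sup>2 * (norm v)\<^sup>2"
      by (metis abs_le_square_iff abs_mult abs_norm_cancel power_mult_distrib)
  qed
  finally show ?thesis by (simp add: frob_sq_def sum_distrib_right)
qed

section \<open>Gain of the adaptive row choices\<close>

lemma residual_component:
  fixes A :: "real^'d^'n"
  assumes "A *v p = b"
  shows "(A *v x - b) $ i = A$i \<bullet> (x - p)"
  using assms by (simp add: matrix_vector_mul_component[symmetric] matrix_vector_mult_diff_distrib)

lemma row_norm_sq_le_frob_sq: "(norm (A$i))\<^sup>2 \<le> frob_sq A"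
  unfolding frob_sq_def by (rule member_le_sum) simp_all

lemma row_inner_sq_le_frob_gain:
  "(A$i \<bullet> v)\<^sup>2 \<le> frob_sq A * ((A$i \<bullet> v)\<^sup>2 / (norm (A$i))\<^sup>2)"
proof (cases "A$i = 0")
  case False
  then have "(A$i \<bullet> v)\<^sup>2 = (norm (A$i))\<^sup>2 * ((A$i \<bullet> v)\<^sup>2 / (norm (A$i))\<^sup>2)" by simp
  also have "\<dots> \<le> frob_sq A * ((A$i \<bullet> v)\<^sup>2 / (norm (A$i))\<^sup>2)"
    by (intro mult_right_mono row_norm_sq_le_frob_sq) simp
  finally show ?thesis .
qed simp

lemma component_sq_le_gain_of_max:
  fixes A :: "real^'d^'n"
  assumes "\<forall>j\<in>S. \<bar>(A *v v) $ j\<bar> \<le> \<bar>(A *v v) $ i\<bar>" and "j \<in> S"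
  shows "((A *v v) $ j)\<^sup>2 \<le> frob_sq A * ((A$i \<bullet> v)\<^sup>2 / (norm (A$i))\<^sup>2)"
proof -
  have "((A *v v) $ j)\<^sup>2 \<le> (A$i \<bullet> v)\<^sup>2"
    using assms by (simp add: abs_le_square_iff matrix_vector_mul_component)
  then show ?thesis using row_inner_sq_le_frob_gain order_trans by blast
qed

lemma max_residual_gain:
  fixes A :: "real^'d^'n"
  assumes "\<forall>j. \<bar>(A *v v) $ j\<bar> \<le> \<bar>(A *v v) $ i\<bar>"
  shows "(norm (A *v v))\<^sup>2 \<le> CARD('n) * frob_sq A * ((A$i \<bullet> v)\<^sup>2 / (norm (A$i))\<^sup>2)"
proof -
  have "(norm (A *v v))\<^sup>2 = (\<Sum>j\<in>UNIV. ((A *v v) $ j)\<^sup>2)" by (rule norm_sq_eq_sum_components)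
  also have "\<dots> \<le> (\<Sum>j\<in>(UNIV::'n set). frob_sq A * ((A$i \<bullet> v)\<^sup>2 / (norm (A$i))\<^sup>2))"
    using assms by (intro sum_mono component_sq_le_gain_of_max[where S=UNIV]) auto
  finally show ?thesis by simp
qed

lemma max_distance_gain:
  fixes A :: "real^'d^'n"
  assumes \<mu>: "\<And>j. A$j \<noteq> 0 \<Longrightarrow> \<mu> \<le> (norm (A$j))\<^sup>2"
    and max: "\<forall>j. \<bar>(A *v v) $ j\<bar> / (norm (A$j))\<^sup>2 \<le> \<bar>(A *v v) $ i\<bar> / (norm (A$i))\<^sup>2"
  shows "\<mu> * (norm (A *v v))\<^sup>2 \<le> (\<Sum>j\<in>UNIV. (norm (A$j))^4) * ((A$i \<bullet> v)\<^sup>2 / (norm (A$i))\<^sup>2)"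
proof -
  define q where "q = \<bar>(A *v v) $ i\<bar> / (norm (A$i))\<^sup>2"
  have component: "\<bar>(A *v v) $ j\<bar> \<le> q * (norm (A$j))\<^sup>2" for j
  proof (cases "A$j = 0")
    case True
    then show ?thesis by (simp add: matrix_vector_mul_component)
  next
    case False
    then have "\<bar>(A *v v) $ j\<bar> / (norm (A$j))\<^sup>2 \<le> q" using max by (simp add: q_def)
    with False show ?thesis by (simp add: pos_divide_le_eq mult.commute)
  qed
  have "((A *v v) $ j)\<^sup>2 \<le> (q * (norm (A$j))\<^sup>2)\<^sup>2" for j
    using power_mono[OF component abs_ge_zero, of j 2] by simp
  then have "(norm (A *v v))\<^sup>2 \<le> (\<Sum>j\<in>UNIV. (q * (norm (A$j))\<^sup>2)\<^sup>2)"
    unfolding norm_sq_eq_sum_components by (intro sum_mono)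
  also have "\<dots> = q\<^sup>2 * (\<Sum>j\<in>UNIV. (norm (A$j))^4)"
    by (simp add: sum_distrib_left power_mult_distrib flip: power_mult)
  finally have bound: "(norm (A *v v))\<^sup>2 \<le> q\<^sup>2 * (\<Sum>j\<in>UNIV. (norm (A$j))^4)" .
  show ?thesis
  proof (cases "A$i = 0")
    case True
    then show ?thesis using bound by (simp add: q_def)
  next
    case False
    have gain: "(A$i \<bullet> v)\<^sup>2 / (norm (A$i))\<^sup>2 = q\<^sup>2 * (norm (A$i))\<^sup>2"
      using False by (simp add: q_def matrix_vector_mul_component power_divide field_simps)
    have "\<mu> * (norm (A *v v))\<^sup>2 \<le> (norm (A$i))\<^sup>2 * (q\<^sup>2 * (\<Sum>j\<in>UNIV. (norm (A$j))^4))"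
      using \<mu>[OF False] bound by (intro mult_mono) auto
    then show ?thesis unfolding gain by (simp add: algebra_simps)
  qed
qed

lemma grk_gain:
  fixes A :: "real^'d^'n"
  assumes p: "A *v p = b" and "grk_prob A b x i \<noteq> 0"
  shows "(norm (A *v x - b))\<^sup>2 \<le> 2 * frob_sq A * ((A$i \<bullet> (x - p))\<^sup>2 / (norm (A$i))\<^sup>2)"
proof -
  let ?r = "A *v x - b"
  have i: "i \<in> grk_set A b x" and "?r $ i \<noteq> 0"
    using assms(2) unfolding grk_prob_def by (auto split: if_splits)
  then have "A$i \<noteq> 0" using residual_component[OF p, of x i] by auto
  then have row_pos: "0 < (norm (A$i))\<^sup>2" by simp
  then have frob_pos: "0 < frob_sq A" using row_norm_sq_le_frob_sq[of A i] by linarith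
  have "0 \<le> (MAX j. \<bar>?r $ j\<bar>\<^sup>2 / (norm (A$j))\<^sup>2)"
    by (rule order_trans[OF _ Max_ge[where x="\<bar>?r $ i\<bar>\<^sup>2 / (norm (A$i))\<^sup>2"]]) auto
  then have eps: "1 / (2 * frob_sq A) \<le> grk_eps A b x"
    unfolding grk_eps_def by (simp add: field_simps)
  have "(norm ?r)\<^sup>2 * (norm (A$i))\<^sup>2 / (2 * frob_sq A)
        \<le> grk_eps A b x * (norm ?r)\<^sup>2 * (norm (A$i))\<^sup>2"
    using mult_right_mono[OF eps, of "(norm ?r)\<^sup>2 * (norm (A$i))\<^sup>2"] by simp
  also have "\<dots> \<le> (?r $ i)\<^sup>2" using i unfolding grk_set_def by simp
  finally show ?thesis
    using frob_pos row_pos unfolding residual_component[OF p] by (simp add: field_simps)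
qed

lemma nonzero_row_norm_sq_lower_bound:
  fixes A :: "real^'d^'n"
  obtains \<mu> where "0 < \<mu>" "\<And>j. A$j \<noteq> 0 \<Longrightarrow> \<mu> \<le> (norm (A$j))\<^sup>2"
proof
  show "0 < Min (insert 1 ((\<lambda>j. (norm (A$j))\<^sup>2) ` {j. A$j \<noteq> 0}))" by (subst Min_gr_iff) auto
  show "Min (insert 1 ((\<lambda>j. (norm (A$j))\<^sup>2) ` {j. A$j \<noteq> 0})) \<le> (norm (A$j))\<^sup>2" if "A$j \<noteq> 0" for j
    using that by (intro Min_le) auto
qed

section \<open>First hitting times of a decreasing sequence\<close>

definition first_hitting_time :: "(nat \<Rightarrow> 'a \<Rightarrow> real) \<Rightarrow> real \<Rightarrow> 'a \<Rightarrow> enat" where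
  "first_hitting_time e c \<omega> = (if \<exists>k. e k \<omega> \<le> c then enat (LEAST k. e k \<omega> \<le> c) else \<infinity>)"

lemma first_hitting_time_eq_enatD:
  assumes "first_hitting_time e c \<omega> = enat k"
  shows "e k \<omega> \<le> c"
proof -
  have ex: "\<exists>k. e k \<omega> \<le> c" using assms unfolding first_hitting_time_def by (auto split: if_splits)
  then have "k = (LEAST k. e k \<omega> \<le> c)" using assms unfolding first_hitting_time_def by simp
  then show ?thesis using LeastI_ex[OF ex] by simp
qed

lemma first_hitting_time_le_iff:
  assumes "\<And>k. e (Suc k) \<omega> \<le> e k \<omega>"
  shows "first_hitting_time e c \<omega> \<le> enat k \<longleftrightarrow> e k \<omega> \<le> c"
proof
  assume "first_hitting_time e c \<omega> \<le> enat k"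
  then obtain j where "first_hitting_time e c \<omega> = enat j" "j \<le> k" by (cases "first_hitting_time e c \<omega>") auto
  then show "e k \<omega> \<le> c"
    using first_hitting_time_eq_enatD lift_Suc_antimono_le[of "\<lambda>k. e k \<omega>", OF assms] order_trans by metis
next
  assume "e k \<omega> \<le> c"
  then show "first_hitting_time e c \<omega> \<le> enat k" unfolding first_hitting_time_def by (auto intro: Least_le)
qed

lemma first_hitting_time_antimono:
  assumes "\<And>k. e (Suc k) \<omega> \<le> e k \<omega>" and "c' \<le> c"
  shows "first_hitting_time e c \<omega> \<le> first_hitting_time e c' \<omega>"
proof (cases "first_hitting_time e c' \<omega>")
  case (enat k)
  then have "e k \<omega> \<le> c" using first_hitting_time_eq_enatD assms(2) by fastforce
  then show ?thesis using enat first_hitting_time_le_iff[of e \<omega> c k, OF assms(1)] by simp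
qed simp

lemma first_hitting_time_le_suminf:
  "ennreal_of_enat (first_hitting_time e c \<omega>) \<le> (\<Sum>t. indicator {\<omega>. c < e t \<omega>} \<omega>)"
proof (cases "\<exists>k. e k \<omega> \<le> c")
  case True
  define k where "k = (LEAST k. e k \<omega> \<le> c)"
  have "t < k \<Longrightarrow> c < e t \<omega>" for t unfolding k_def using not_less_Least by force
  then have "of_nat k = (\<Sum>t<k. indicator {\<omega>. c < e t \<omega>} \<omega> :: ennreal)" by simp
  also have "\<dots> \<le> (\<Sum>t. indicator {\<omega>. c < e t \<omega>} \<omega>)" by (rule sum_le_suminf) auto
  finally show ?thesis using True unfolding first_hitting_time_def k_def by simp
next
  case False
  then have "(\<lambda>t. indicator {\<omega>. c < e t \<omega>} \<omega> :: ennreal) = (\<lambda>t. 1)" by (auto simp: not_le)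
  moreover have "(\<Sum>t. 1 :: ennreal) = \<top>"
    using summable_iff_suminf_neq_top[of "\<lambda>_. 1 :: real"] by (simp add: summable_const_iff)
  ultimately show ?thesis by simp
qed

lemma stopping_time_first_hitting_time:
  assumes "\<And>k. e k \<in> borel_measurable (F k)"
    and "\<And>k j \<omega>. \<omega> \<in> space (F k) \<Longrightarrow> e (Suc j) \<omega> \<le> e j \<omega>"
  shows "stopping_time (enat_filt M F) (first_hitting_time e c)"
proof
  fix t :: enat
  show "Measurable.pred (enat_filt M F t) (\<lambda>\<omega>. first_hitting_time e c \<omega> \<le> t)"
  proof (cases t)
    case (enat k)
    have "first_hitting_time e c \<omega> \<le> enat k \<longleftrightarrow> e k \<omega> \<le> c" if "\<omega> \<in> space (F k)" for \<omega>
      by (rule first_hitting_time_le_iff) (rule assms(2)[OF that])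
    moreover have "Measurable.pred (F k) (\<lambda>\<omega>. e k \<omega> \<le> c)" using assms(1) by measurable
    ultimately show ?thesis
      unfolding enat enat_filt_def enat.case by (subst measurable_cong) auto
  qed (simp add: enat_filt_def)
qed

lemma sums_ones_then_geometric:
  fixes \<rho> :: real
  assumes "\<bar>\<rho>\<bar> < 1"
  shows "(\<lambda>t. if t < l then 1 else \<rho>^(t - l)) sums (real l + 1 / (1 - \<rho>))"
proof -
  have "(\<lambda>t. if t + l < l then 1 else \<rho>^(t + l - l)) sums (1 / (1 - \<rho>))"
    using geometric_sums[of \<rho>] assms by simp
  then show ?thesis by (subst (asm) sums_iff_shift) (simp add: add.commute)
qed

context prob_space
begin

lemma nn_integral_first_hitting_time_le:
  assumes [measurable]: "\<And>t. e t \<in> borel_measurable M"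
  shows "(\<integral>\<^sup>+\<omega>. ennreal_of_enat (first_hitting_time e c \<omega>) \<partial>M) \<le> (\<Sum>t. emeasure M {\<omega>\<in>space M. c < e t \<omega>})"
    and "(\<Sum>t. emeasure M {\<omega>\<in>space M. c < e t \<omega>}) < \<infinity> \<Longrightarrow> AE \<omega> in M. first_hitting_time e c \<omega> \<noteq> \<infinity>"
proof -
  define g where "g \<omega> = (\<Sum>t. indicator {\<omega>. c < e t \<omega>} \<omega> :: ennreal)" for \<omega>
  have [measurable]: "g \<in> borel_measurable M" unfolding g_def by measurable
  have "(\<integral>\<^sup>+\<omega>. indicator {\<omega>. c < e t \<omega>} \<omega> \<partial>M) = emeasure M {\<omega>\<in>space M. c < e t \<omega>}" for t
  proof -
    have "{\<omega>\<in>space M. c < e t \<omega>} \<in> sets M" by measurable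
    moreover have "(\<integral>\<^sup>+\<omega>. indicator {\<omega>. c < e t \<omega>} \<omega> \<partial>M) = (\<integral>\<^sup>+\<omega>. indicator {\<omega>\<in>space M. c < e t \<omega>} \<omega> \<partial>M)"
      by (intro nn_integral_cong) (simp split: split_indicator)
    ultimately show ?thesis by simp
  qed
  then have g_integral: "(\<integral>\<^sup>+\<omega>. g \<omega> \<partial>M) = (\<Sum>t. emeasure M {\<omega>\<in>space M. c < e t \<omega>})"
    unfolding g_def by (subst nn_integral_suminf) auto
  have le_g: "ennreal_of_enat (first_hitting_time e c \<omega>) \<le> g \<omega>" for \<omega>
    unfolding g_def by (rule first_hitting_time_le_suminf)
  show "(\<integral>\<^sup>+\<omega>. ennreal_of_enat (first_hitting_time e c \<omega>) \<partial>M) \<le> (\<Sum>t. emeasure M {\<omega>\<in>space M. c < e t \<omega>})"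
    unfolding g_integral[symmetric] by (rule nn_integral_mono[OF le_g])
  assume "(\<Sum>t. emeasure M {\<omega>\<in>space M. c < e t \<omega>}) < \<infinity>"
  then have "AE \<omega> in M. g \<omega> \<noteq> \<infinity>"
    by (intro nn_integral_noteq_infinite) (auto simp: g_integral)
  then show "AE \<omega> in M. first_hitting_time e c \<omega> \<noteq> \<infinity>"
    by eventually_elim (metis le_g ennreal_of_enat_infty infinity_ennreal_def top_unique)
qed

lemma prob_exceedance_le_geometric:
  assumes [measurable]: "e \<in> borel_measurable M"
    and nonneg: "\<And>\<omega>. \<omega> \<in> space M \<Longrightarrow> 0 \<le> e \<omega>"
    and bounded: "\<And>\<omega>. \<omega> \<in> space M \<Longrightarrow> e \<omega> \<le> e0"
    and mean: "(\<integral>\<omega>. e \<omega> \<partial>M) \<le> \<rho>^t * e0" and "0 < \<rho>"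
  shows "measure M {\<omega>\<in>space M. \<rho>^l * e0 < e \<omega>} \<le> (if t < l then 1 else \<rho>^(t - l))"
proof (cases "t < l")
  case False
  obtain \<omega>0 where "\<omega>0 \<in> space M" using not_empty by blast
  then have "0 \<le> e0" using nonneg bounded order_trans by blast
  show ?thesis
  proof (cases "e0 = 0")
    case True
    then have "{\<omega>\<in>space M. \<rho>^l * e0 < e \<omega>} = {}" using bounded by (auto simp: not_less)
    then show ?thesis using \<open>0 < \<rho>\<close> by (simp del: Collect_empty_eq)
  next
    case False
    with \<open>0 \<le> e0\<close> \<open>0 < \<rho>\<close> have c: "0 < \<rho>^l * e0" by simp
    have "integrable M e"
      using nonneg bounded by (intro integrable_const_bound[where B=e0]) auto
    then have "measure M {\<omega>\<in>space M. \<rho>^l * e0 < e \<omega>} \<le> (\<integral>\<omega>. e \<omega> \<partial>M) / (\<rho>^l * e0)"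
      using c nonneg
      by (intro order_trans[OF finite_measure_mono integral_Markov_inequality_measure[where A="space M"]])
         (auto intro!: AE_I2)
    also have "\<dots> \<le> \<rho>^t * e0 / (\<rho>^l * e0)" using mean c by (intro divide_right_mono) auto
    also have "\<dots> = \<rho>^(t - l)" using \<open>\<not> t < l\<close> \<open>e0 \<noteq> 0\<close> \<open>0 < \<rho>\<close> by (simp add: power_diff)
    finally show ?thesis using \<open>\<not> t < l\<close> by simp
  qed
qed simp

lemma exceedance_sum_le_geometric:
  assumes "\<And>t. e t \<in> borel_measurable M"
    and "\<And>t \<omega>. \<omega> \<in> space M \<Longrightarrow> 0 \<le> e t \<omega>" and "\<And>t \<omega>. \<omega> \<in> space M \<Longrightarrow> e t \<omega> \<le> e0"
    and "\<And>t. (\<integral>\<omega>. e t \<omega> \<partial>M) \<le> \<rho>^t * e0" and \<rho>: "0 < \<rho>" "\<rho> < 1"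
  shows "(\<Sum>t. emeasure M {\<omega>\<in>space M. \<rho>^l * e0 < e t \<omega>}) \<le> ennreal (real l + 1 / (1 - \<rho>))"
proof -
  define f :: "nat \<Rightarrow> real" where "f t = (if t < l then 1 else \<rho>^(t - l))" for t
  have "(\<Sum>t. emeasure M {\<omega>\<in>space M. \<rho>^l * e0 < e t \<omega>}) \<le> (\<Sum>t. ennreal (f t))"
    unfolding f_def using assms
    by (intro suminf_le ennreal_leI) (auto simp: emeasure_eq_measure prob_exceedance_le_geometric)
  also have "(\<Sum>t. ennreal (f t)) = ennreal (real l + 1 / (1 - \<rho>))"
  proof (rule sums_unique[symmetric])
    have "f sums (real l + 1 / (1 - \<rho>))" unfolding f_def using \<rho> by (intro sums_ones_then_geometric) simp
    then show "(\<lambda>t. ennreal (f t)) sums ennreal (real l + 1 / (1 - \<rho>))"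
      using \<rho> by (subst sums_ennreal) (auto simp: f_def)
  qed
  finally show ?thesis .
qed

lemma nn_integral_indicator_mult_independent:
  fixes h :: "'a \<Rightarrow> ennreal"
  assumes sub: "subalgebra M G" and Q: "Q \<in> sets M" and "0 \<le> q"
    and indep: "\<And>B. B \<in> sets G \<Longrightarrow> measure M (Q \<inter> B) = q * measure M B"
    and h: "h \<in> borel_measurable G"
  shows "(\<integral>\<^sup>+\<omega>. indicator Q \<omega> * h \<omega> \<partial>M) = q * (\<integral>\<^sup>+\<omega>. h \<omega> \<partial>M)"
proof -
  have hM: "h \<in> borel_measurable M" by (rule measurable_from_subalg[OF sub h])
  have GM: "B \<in> sets M" if "B \<in> sets G" for B using sub that unfolding subalgebra_def by auto
  define N1 where "N1 = density M (indicator Q)"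
  define N2 where "N2 = density M (\<lambda>_. ennreal q)"
  have sub1: "subalgebra N1 G" and sub2: "subalgebra N2 G"
    using sub unfolding N1_def N2_def subalgebra_def by simp_all
  have "emeasure N1 B = emeasure N2 B" if B: "B \<in> sets G" for B
  proof -
    have "emeasure N1 B = (\<integral>\<^sup>+\<omega>. indicator (Q \<inter> B) \<omega> \<partial>M)"
      unfolding N1_def using Q GM[OF B]
      by (simp add: emeasure_density indicator_inter_arith ennreal_indicator ennreal_mult')
    also have "\<dots> = emeasure M (Q \<inter> B)" using Q GM[OF B] by simp
    also have "\<dots> = ennreal q * emeasure M B"
      using indep[OF B] \<open>0 \<le> q\<close> by (simp add: emeasure_eq_measure ennreal_mult)
    also have "\<dots> = emeasure N2 B"
      unfolding N2_def using GM[OF B] by (simp add: emeasure_density nn_integral_cmult_indicator)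
    finally show ?thesis .
  qed
  then have restr: "restr_to_subalg N1 G = restr_to_subalg N2 G"
    by (intro measure_eqI) (simp_all add: sets_restr_to_subalg[OF sub1] sets_restr_to_subalg[OF sub2]
        emeasure_restr_to_subalg[OF sub1] emeasure_restr_to_subalg[OF sub2])
  have "(\<integral>\<^sup>+\<omega>. indicator Q \<omega> * h \<omega> \<partial>M) = (\<integral>\<^sup>+\<omega>. h \<omega> \<partial>restr_to_subalg N1 G)"
    unfolding N1_def using Q hM sub1[unfolded N1_def]
    by (simp add: nn_integral_density nn_integral_subalgebra2[OF _ h])
  also have "\<dots> = (\<integral>\<^sup>+\<omega>. ennreal q * h \<omega> \<partial>M)"
    unfolding restr N2_def using hM sub2[unfolded N2_def]
    by (simp add: nn_integral_density nn_integral_subalgebra2[OF _ h])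
  finally show ?thesis using hM by (simp add: nn_integral_cmult)
qed

lemma integral_indicator_mult_independent:
  fixes h :: "'a \<Rightarrow> real"
  assumes sub: "subalgebra M G" and Q: "Q \<in> sets M" and "0 \<le> q"
    and indep: "\<And>B. B \<in> sets G \<Longrightarrow> measure M (Q \<inter> B) = q * measure M B"
    and h: "h \<in> borel_measurable G" and h_nonneg: "\<And>\<omega>. \<omega> \<in> space M \<Longrightarrow> 0 \<le> h \<omega>"
  shows "(\<integral>\<omega>. indicator Q \<omega> * h \<omega> \<partial>M) = q * (\<integral>\<omega>. h \<omega> \<partial>M)"
proof -
  have hM[measurable]: "h \<in> borel_measurable M" by (rule measurable_from_subalg[OF sub h])
  have "(\<integral>\<^sup>+\<omega>. ennreal (indicator Q \<omega> * h \<omega>) \<partial>M) = (\<integral>\<^sup>+\<omega>. indicator Q \<omega> * ennreal (h \<omega>) \<partial>M)"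
    by (intro nn_integral_cong) (simp split: split_indicator)
  also have "\<dots> = q * (\<integral>\<^sup>+\<omega>. ennreal (h \<omega>) \<partial>M)"
    using h by (intro nn_integral_indicator_mult_independent[OF sub Q \<open>0 \<le> q\<close> indep]) auto
  finally show ?thesis
    using Q h_nonneg \<open>0 \<le> q\<close>
    by (simp add: integral_eq_nn_integral enn2real_mult AE_I2)
qed

end

lemma continuous_on_residual: "continuous_on UNIV (\<lambda>y. A *v y - (b::real^'n))"
  by (intro continuous_intros linear_continuous_on) auto

lemma measurable_residual[measurable]: "(\<lambda>y. A *v y - (b::real^'n)) \<in> borel_measurable borel"
  by (rule borel_measurable_continuous_onI[OF continuous_on_residual])

lemma measurable_residual_component[measurable]:
  "(\<lambda>y. (A *v y - (b::real^'n)) $ j) \<in> borel_measurable borel"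
  by (rule borel_measurable_continuous_onI[OF continuous_on_component[OF continuous_on_residual]])

lemma measurable_grk_eps[measurable]: "(\<lambda>y. grk_eps A b y) \<in> borel_measurable borel"
  unfolding grk_eps_def by measurable

lemma measurable_grk_prob[measurable]: "(\<lambda>y. grk_prob A b y i) \<in> borel_measurable borel"
proof -
  have "(\<Sum>j\<in>grk_set A b y. \<bar>(A *v y - b) $ j\<bar>\<^sup>2)
      = (\<Sum>j\<in>UNIV. if j \<in> grk_set A b y then \<bar>(A *v y - b) $ j\<bar>\<^sup>2 else 0)" for y
    using sum.inter_restrict[of UNIV "\<lambda>j. \<bar>(A *v y - b) $ j\<bar>\<^sup>2" "grk_set A b y"] by simp
  then have eq: "grk_prob A b y i = (if i \<in> grk_set A b y then \<bar>(A *v y - b) $ i\<bar>\<^sup>2 /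
      (\<Sum>j\<in>UNIV. if j \<in> grk_set A b y then \<bar>(A *v y - b) $ j\<bar>\<^sup>2 else 0) else 0)" for y
    unfolding grk_prob_def by presburger
  show ?thesis unfolding eq grk_set_def mem_Collect_eq by measurable
qed

lemma exists_subset_card_containing:
  fixes j :: "'n::finite"
  assumes "1 \<le> k" "k \<le> CARD('n)"
  shows "\<exists>T. j \<in> T \<and> card T = k"
proof -
  have "k - 1 \<le> card (UNIV - {j})" using assms by (simp add: card_Diff_singleton)
  then obtain U where "U \<subseteq> UNIV - {j}" "card U = k - 1" "finite U"
    by (rule obtain_subset_with_card_n)
  then have "j \<notin> U" "finite U" by auto
  then have "j \<in> insert j U" "card (insert j U) = k" using assms \<open>card U = k - 1\<close> by auto
  then show ?thesis by blast
qed

section \<open>The Kaczmarz process\<close>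

lemma le_ratio_of_decrease:
  fixes C \<sigma> E E' :: real
  assumes "0 \<le> C" "0 < \<sigma>" "E' \<le> E" "\<sigma> * E \<le> C * (E - E')"
  shows "E' \<le> C / (C + \<sigma>) * E"
proof -
  have "\<sigma> * E' \<le> \<sigma> * E" using assms(2,3) by simp
  with assms(4) have "E' * (C + \<sigma>) \<le> C * E" by (simp add: algebra_simps)
  then show ?thesis using assms(1,2) by (simp add: pos_le_divide_eq)
qed

locale kaczmarz_process = prob_space M for M :: "'a measure" +
  fixes F :: "nat \<Rightarrow> 'a measure" and A :: "real^'d^'n" and b :: "real^'n" and x0 :: "real^'d"
    and x :: "nat \<Rightarrow> 'a \<Rightarrow> real^'d" and w :: "nat \<Rightarrow> 'a \<Rightarrow> real^'n"
  assumes consistent: "\<exists>y. A *v y = b"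
    and subalgebra_F: "\<And>k. subalgebra M (F k)"
    and x_0: "\<And>\<omega>. \<omega> \<in> space M \<Longrightarrow> x 0 \<omega> = x0"
    and x_Suc: "\<And>k \<omega>. \<omega> \<in> space M \<Longrightarrow> x (Suc k) \<omega> = kacz_step A b (x k \<omega>) (w k \<omega>)"
    and w_axis: "\<And>k \<omega>. \<omega> \<in> space M \<Longrightarrow> \<exists>i. w k \<omega> = axis i 1"
    and x_measurable_F: "\<And>k. x k \<in> borel_measurable (F k)"
    and w_measurable_F: "\<And>k. w k \<in> borel_measurable (F (Suc k))"
begin

definition p :: "real^'d" where "p = closest_point (sol_set A b) x0"

definition err :: "nat \<Rightarrow> 'a \<Rightarrow> real" where "err k \<omega> = (norm (x k \<omega> - p))\<^sup>2"

lemma p_solves: "A *v p = b" and x0_minus_p_in_kernel_perp: "x0 - p \<in> kernel_perp A"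
  using closest_point_sol_set consistent unfolding p_def by blast+

lemma residual_eq: "A *v x k \<omega> - b = A *v (x k \<omega> - p)"
  using p_solves by (simp add: matrix_vector_mult_diff_distrib)

lemma x_Suc_minus_p:
  assumes "\<omega> \<in> space M" and "w k \<omega> = axis i 1"
  shows "x (Suc k) \<omega> - p = (x k \<omega> - p) - ((A$i \<bullet> (x k \<omega> - p)) / (norm (A$i))\<^sup>2) *\<^sub>R A$i"
  unfolding x_Suc[OF assms(1)] assms(2) by (rule kacz_step_axis_minus_solution[OF p_solves])

lemma err_Suc:
  assumes "\<omega> \<in> space M" and "w k \<omega> = axis i 1"
  shows "err (Suc k) \<omega> = err k \<omega> - (A$i \<bullet> (x k \<omega> - p))\<^sup>2 / (norm (A$i))\<^sup>2"
  unfolding err_def x_Suc_minus_p[OF assms] by (rule norm_diff_projection_sq)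

lemma x_minus_p_in_kernel_perp: "\<omega> \<in> space M \<Longrightarrow> x k \<omega> - p \<in> kernel_perp A"
proof (induction k)
  case 0
  then show ?case using x_0 x0_minus_p_in_kernel_perp by simp
next
  case (Suc k)
  obtain i where i: "w k \<omega> = axis i 1" using w_axis[OF Suc.prems] by blast
  show ?case unfolding x_Suc_minus_p[OF Suc.prems i]
    by (intro subspace_diff subspace_scale subspace_kernel_perp Suc.IH Suc.prems row_in_kernel_perp)
qed

lemma err_nonneg: "0 \<le> err k \<omega>"
  unfolding err_def by simp

lemma err_Suc_le:
  assumes "\<omega> \<in> space M"
  shows "err (Suc k) \<omega> \<le> err k \<omega>"
proof -
  obtain i where "w k \<omega> = axis i 1" using w_axis[OF assms] by blast
  then show ?thesis using err_Suc[OF assms] by simp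
qed

lemma err_le_err_0: "\<omega> \<in> space M \<Longrightarrow> err k \<omega> \<le> (norm (x0 - p))\<^sup>2"
proof (induction k)
  case (Suc k)
  then show ?case using err_Suc_le[of \<omega> k] by simp
qed (simp add: err_def x_0)

lemma measurable_err_F[measurable]: "err k \<in> borel_measurable (F k)"
  using x_measurable_F[of k] unfolding err_def[abs_def] by measurable

lemma measurable_x[measurable]: "x k \<in> borel_measurable M"
  and measurable_w[measurable]: "w k \<in> borel_measurable M"
  and measurable_err[measurable]: "err k \<in> borel_measurable M"
  by (auto intro: measurable_from_subalg[OF subalgebra_F] x_measurable_F w_measurable_F measurable_err_F)

lemma integrable_err: "integrable M (err k)"
  by (rule integrable_const_bound[where B="(norm (x0 - p))\<^sup>2"]) (auto simp: err_le_err_0 err_nonneg)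

lemma residual_sq_le:
  assumes "\<omega> \<in> space M"
  shows "(norm (A *v x k \<omega> - b))\<^sup>2 \<le> frob_sq A * (norm (x0 - p))\<^sup>2"
proof -
  have "(norm (A *v x k \<omega> - b))\<^sup>2 \<le> frob_sq A * err k \<omega>"
    unfolding residual_eq err_def by (rule norm_matrix_vector_sq_le)
  also have "\<dots> \<le> frob_sq A * (norm (x0 - p))\<^sup>2"
    using err_le_err_0[OF assms] frob_sq_nonneg by (rule mult_left_mono)
  finally show ?thesis .
qed

lemma integrable_residual_component_sq: "integrable M (\<lambda>\<omega>. ((A *v x k \<omega> - b) $ j)\<^sup>2)"
proof (rule integrable_const_bound)
  show "AE \<omega> in M. norm (((A *v x k \<omega> - b) $ j)\<^sup>2) \<le> frob_sq A * (norm (x0 - p))\<^sup>2"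
  proof (rule AE_I2)
    fix \<omega> assume "\<omega> \<in> space M"
    then have "((A *v x k \<omega> - b) $ j)\<^sup>2 \<le> frob_sq A * (norm (x0 - p))\<^sup>2"
      by (intro order_trans[OF component_sq_le_norm_sq residual_sq_le])
    then show "norm (((A *v x k \<omega> - b) $ j)\<^sup>2) \<le> frob_sq A * (norm (x0 - p))\<^sup>2" by simp
  qed
  show "(\<lambda>\<omega>. ((A *v x k \<omega> - b) $ j)\<^sup>2) \<in> borel_measurable M" by measurable
qed

lemma integrable_residual_sq: "integrable M (\<lambda>\<omega>. (norm (A *v x k \<omega> - b))\<^sup>2)"
  unfolding norm_sq_eq_sum_components by (intro Bochner_Integration.integrable_sum integrable_residual_component_sq)

lemma residual_coercive:
  obtains \<sigma> where "0 < \<sigma>" "\<And>k \<omega>. \<omega> \<in> space M \<Longrightarrow> \<sigma> * err k \<omega> \<le> (norm (A *v x k \<omega> - b))\<^sup>2"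
proof -
  obtain \<sigma> where "0 < \<sigma>" "\<forall>v\<in>kernel_perp A. \<sigma> * (norm v)\<^sup>2 \<le> (norm (A *v v))\<^sup>2"
    using kernel_perp_coercive by blast
  then show ?thesis using that x_minus_p_in_kernel_perp unfolding err_def residual_eq by blast
qed

definition expected_progress :: "real \<Rightarrow> bool" where
  "expected_progress C \<longleftrightarrow> 0 \<le> C \<and> (\<forall>k. (\<integral>\<omega>. (norm (A *v x k \<omega> - b))\<^sup>2 \<partial>M)
      \<le> C * ((\<integral>\<omega>. err k \<omega> \<partial>M) - (\<integral>\<omega>. err (Suc k) \<omega> \<partial>M)))"

lemma expected_progressI_AE:
  assumes "0 \<le> C"
    and "\<And>k. AE \<omega> in M. (norm (A *v x k \<omega> - b))\<^sup>2 \<le> C * (err k \<omega> - err (Suc k) \<omega>)"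
  shows "expected_progress C"
  unfolding expected_progress_def
proof (intro conjI allI \<open>0 \<le> C\<close>)
  fix k
  have "(\<integral>\<omega>. (norm (A *v x k \<omega> - b))\<^sup>2 \<partial>M) \<le> (\<integral>\<omega>. C * (err k \<omega> - err (Suc k) \<omega>) \<partial>M)"
    using assms(2) by (intro integral_mono_AE integrable_residual_sq integrable_mult_right
        Bochner_Integration.integrable_diff integrable_err)
  then show "(\<integral>\<omega>. (norm (A *v x k \<omega> - b))\<^sup>2 \<partial>M)
      \<le> C * ((\<integral>\<omega>. err k \<omega> \<partial>M) - (\<integral>\<omega>. err (Suc k) \<omega> \<partial>M))"
    by (simp add: integrable_err)
qed

lemma expected_contraction:
  assumes "expected_progress C"
  obtains \<rho> where "0 < \<rho>" "\<rho> < 1" "\<And>k. (\<integral>\<omega>. err (Suc k) \<omega> \<partial>M) \<le> \<rho> * (\<integral>\<omega>. err k \<omega> \<partial>M)"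
proof -
  obtain \<sigma> where "0 < \<sigma>" and \<sigma>: "\<And>k \<omega>. \<omega> \<in> space M \<Longrightarrow> \<sigma> * err k \<omega> \<le> (norm (A *v x k \<omega> - b))\<^sup>2"
    using residual_coercive by blast
  have "0 \<le> C" and progress: "\<And>k. (\<integral>\<omega>. (norm (A *v x k \<omega> - b))\<^sup>2 \<partial>M)
      \<le> C * ((\<integral>\<omega>. err k \<omega> \<partial>M) - (\<integral>\<omega>. err (Suc k) \<omega> \<partial>M))"
    using assms unfolding expected_progress_def by auto
  have contraction: "(\<integral>\<omega>. err (Suc k) \<omega> \<partial>M) \<le> C / (C + \<sigma>) * (\<integral>\<omega>. err k \<omega> \<partial>M)" for k
  proof (rule le_ratio_of_decrease[OF \<open>0 \<le> C\<close> \<open>0 < \<sigma>\<close>])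
    show "(\<integral>\<omega>. err (Suc k) \<omega> \<partial>M) \<le> (\<integral>\<omega>. err k \<omega> \<partial>M)"
      by (intro integral_mono integrable_err err_Suc_le)
    have "\<sigma> * (\<integral>\<omega>. err k \<omega> \<partial>M) \<le> (\<integral>\<omega>. (norm (A *v x k \<omega> - b))\<^sup>2 \<partial>M)"
      by (subst integral_mult_right_zero[symmetric])
        (intro integral_mono integrable_mult_right integrable_err integrable_residual_sq \<sigma>)
    also have "\<dots> \<le> C * ((\<integral>\<omega>. err k \<omega> \<partial>M) - (\<integral>\<omega>. err (Suc k) \<omega> \<partial>M))" by (rule progress)
    finally show "\<sigma> * (\<integral>\<omega>. err k \<omega> \<partial>M) \<le> C * ((\<integral>\<omega>. err k \<omega> \<partial>M) - (\<integral>\<omega>. err (Suc k) \<omega> \<partial>M))" .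
  qed
  have "0 < C + \<sigma>" using \<open>0 \<le> C\<close> \<open>0 < \<sigma>\<close> by simp
  \<comment> \<open>The maximum with 1/2 only keeps \<rho> positive: the tail bounds divide by \<rho>^l.\<close>
  show ?thesis
  proof (rule that)
    show "0 < max (1/2) (C / (C + \<sigma>))" by simp
    show "max (1/2) (C / (C + \<sigma>)) < 1" using \<open>0 < C + \<sigma>\<close> \<open>0 < \<sigma>\<close> by simp
    have "C / (C + \<sigma>) * (\<integral>\<omega>. err k \<omega> \<partial>M) \<le> max (1/2) (C / (C + \<sigma>)) * (\<integral>\<omega>. err k \<omega> \<partial>M)" for k
      by (intro mult_right_mono integral_nonneg_AE AE_I2 err_nonneg) simp
    then show "(\<integral>\<omega>. err (Suc k) \<omega> \<partial>M) \<le> max (1/2) (C / (C + \<sigma>)) * (\<integral>\<omega>. err k \<omega> \<partial>M)" for k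
      using contraction order_trans by blast
  qed
qed

lemma max_residual_progress:
  assumes "\<forall>k. \<forall>\<omega>\<in>space M. \<exists>i. w k \<omega> = axis i 1 \<and>
      (\<forall>j. \<bar>(A *v x k \<omega> - b) $ j\<bar> \<le> \<bar>(A *v x k \<omega> - b) $ i\<bar>)"
  shows "expected_progress (CARD('n) * frob_sq A)"
proof (rule expected_progressI_AE)
  fix k
  show "AE \<omega> in M. (norm (A *v x k \<omega> - b))\<^sup>2 \<le> CARD('n) * frob_sq A * (err k \<omega> - err (Suc k) \<omega>)"
  proof (rule AE_I2)
    fix \<omega> assume \<omega>: "\<omega> \<in> space M"
    then obtain i where i: "w k \<omega> = axis i 1"
      and "\<forall>j. \<bar>(A *v x k \<omega> - b) $ j\<bar> \<le> \<bar>(A *v x k \<omega> - b) $ i\<bar>"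
      using assms by blast
    then show "(norm (A *v x k \<omega> - b))\<^sup>2 \<le> CARD('n) * frob_sq A * (err k \<omega> - err (Suc k) \<omega>)"
      using max_residual_gain unfolding err_Suc[OF \<omega> i] residual_eq by simp
  qed
qed (simp add: frob_sq_nonneg)

lemma max_distance_progress:
  assumes "\<forall>k. \<forall>\<omega>\<in>space M. \<exists>i. w k \<omega> = axis i 1 \<and>
      (\<forall>j. \<bar>(A *v x k \<omega> - b) $ j\<bar> / (norm (A $ j))\<^sup>2 \<le> \<bar>(A *v x k \<omega> - b) $ i\<bar> / (norm (A $ i))\<^sup>2)"
  shows "\<exists>C. expected_progress C"
proof -
  obtain \<mu> where "0 < \<mu>" and \<mu>: "\<And>j. A$j \<noteq> 0 \<Longrightarrow> \<mu> \<le> (norm (A$j))\<^sup>2"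
    using nonzero_row_norm_sq_lower_bound[of A] by blast
  have "expected_progress ((\<Sum>j\<in>UNIV. (norm (A$j))^4) / \<mu>)"
  proof (rule expected_progressI_AE)
    fix k
    show "AE \<omega> in M. (norm (A *v x k \<omega> - b))\<^sup>2
        \<le> (\<Sum>j\<in>UNIV. (norm (A$j))^4) / \<mu> * (err k \<omega> - err (Suc k) \<omega>)"
    proof (rule AE_I2)
      fix \<omega> assume \<omega>: "\<omega> \<in> space M"
      then obtain i where i: "w k \<omega> = axis i 1" and
        "\<forall>j. \<bar>(A *v x k \<omega> - b) $ j\<bar> / (norm (A $ j))\<^sup>2 \<le> \<bar>(A *v x k \<omega> - b) $ i\<bar> / (norm (A $ i))\<^sup>2"
        using assms by blast
      then have "\<mu> * (norm (A *v x k \<omega> - b))\<^sup>2 \<le> (\<Sum>j\<in>UNIV. (norm (A$j))^4) * (err k \<omega> - err (Suc k) \<omega>)"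
        using max_distance_gain[OF \<mu>] unfolding err_Suc[OF \<omega> i] residual_eq by simp
      then show "(norm (A *v x k \<omega> - b))\<^sup>2 \<le> (\<Sum>j\<in>UNIV. (norm (A$j))^4) / \<mu> * (err k \<omega> - err (Suc k) \<omega>)"
        using \<open>0 < \<mu>\<close> by (simp add: pos_le_divide_eq mult.commute)
    qed
  qed (use \<open>0 < \<mu>\<close> in \<open>simp add: sum_nonneg\<close>)
  then show ?thesis ..
qed

lemma AE_grk_prob_nonzero:
  assumes grk: "\<forall>k i. \<forall>B\<in>sets (F k).
      measure M ({\<omega>\<in>space M. w k \<omega> = axis i 1 \<and> A *v x k \<omega> \<noteq> b} \<inter> B)
      = (LINT \<omega>:B|M. (if A *v x k \<omega> \<noteq> b then grk_prob A b (x k \<omega>) i else 0))"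
  shows "AE \<omega> in M. w k \<omega> = axis i 1 \<and> A *v x k \<omega> \<noteq> b \<longrightarrow> grk_prob A b (x k \<omega>) i \<noteq> 0"
proof -
  define B where "B = {\<omega>\<in>space M. grk_prob A b (x k \<omega>) i = 0}"
  have [measurable]: "(\<lambda>\<omega>. grk_prob A b (x k \<omega>) i) \<in> borel_measurable (F k)"
    by (rule measurable_compose[OF x_measurable_F measurable_grk_prob])
  have "{\<omega>\<in>space (F k). grk_prob A b (x k \<omega>) i = 0} \<in> sets (F k)" by measurable
  then have "B \<in> sets (F k)" using subalgebra_F[of k] unfolding B_def subalgebra_def by simp
  then have "measure M ({\<omega>\<in>space M. w k \<omega> = axis i 1 \<and> A *v x k \<omega> \<noteq> b} \<inter> B)
      = (LINT \<omega>:B|M. (if A *v x k \<omega> \<noteq> b then grk_prob A b (x k \<omega>) i else 0))"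
    using grk by blast
  also have "\<dots> = 0"
  proof -
    have "(\<lambda>\<omega>. indicator B \<omega> *\<^sub>R (if A *v x k \<omega> \<noteq> b then grk_prob A b (x k \<omega>) i else 0)) = (\<lambda>\<omega>. 0)"
      by (auto simp: B_def split: split_indicator)
    then show ?thesis unfolding set_lebesgue_integral_def by simp
  qed
  finally have "measure M {\<omega>\<in>space M. w k \<omega> = axis i 1 \<and> A *v x k \<omega> \<noteq> b \<and> grk_prob A b (x k \<omega>) i = 0} = 0"
    by (simp add: B_def Int_def conj_ac)
  moreover have "{\<omega>\<in>space M. w k \<omega> = axis i 1 \<and> A *v x k \<omega> \<noteq> b \<and> grk_prob A b (x k \<omega>) i = 0} \<in> sets M"
  proof -
    have [measurable]: "Measurable.pred M (\<lambda>\<omega>. w k \<omega> = axis i 1)"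
      by (rule pred_eq_const1[where N=borel]) (auto simp: borel_closed)
    have [measurable]: "Measurable.pred M (\<lambda>\<omega>. A *v x k \<omega> - b = 0)"
      by (rule pred_eq_const1[where N=borel]) (auto simp: borel_closed)
    show ?thesis unfolding right_minus_eq[symmetric, of "A *v x k _" b] by measurable
  qed
  ultimately show ?thesis by (subst AE_iff_measurable[OF _ refl]) (auto simp: emeasure_eq_measure)
qed

lemma grk_progress:
  assumes grk: "\<forall>k i. \<forall>B\<in>sets (F k).
      measure M ({\<omega>\<in>space M. w k \<omega> = axis i 1 \<and> A *v x k \<omega> \<noteq> b} \<inter> B)
      = (LINT \<omega>:B|M. (if A *v x k \<omega> \<noteq> b then grk_prob A b (x k \<omega>) i else 0))"
  shows "expected_progress (2 * frob_sq A)"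
proof (rule expected_progressI_AE)
  fix k
  have "AE \<omega> in M. \<forall>i\<in>UNIV. w k \<omega> = axis i 1 \<and> A *v x k \<omega> \<noteq> b \<longrightarrow> grk_prob A b (x k \<omega>) i \<noteq> 0"
    by (rule AE_finite_allI) (use AE_grk_prob_nonzero[OF grk] in auto)
  then show "AE \<omega> in M. (norm (A *v x k \<omega> - b))\<^sup>2 \<le> 2 * frob_sq A * (err k \<omega> - err (Suc k) \<omega>)"
  proof (rule AE_mp, intro AE_I2 impI)
    fix \<omega> assume \<omega>: "\<omega> \<in> space M"
      and nonzero: "\<forall>i\<in>UNIV. w k \<omega> = axis i 1 \<and> A *v x k \<omega> \<noteq> b \<longrightarrow> grk_prob A b (x k \<omega>) i \<noteq> 0"
    obtain i where i: "w k \<omega> = axis i 1" using w_axis[OF \<omega>] by blast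
    show "(norm (A *v x k \<omega> - b))\<^sup>2 \<le> 2 * frob_sq A * (err k \<omega> - err (Suc k) \<omega>)"
    proof (cases "A *v x k \<omega> = b")
      case True
      then show ?thesis using err_Suc_le[OF \<omega>, of k] frob_sq_nonneg[of A] by simp
    next
      case False
      with nonzero i have "grk_prob A b (x k \<omega>) i \<noteq> 0" by blast
      from grk_gain[OF p_solves this] show ?thesis unfolding err_Suc[OF \<omega> i] by simp
    qed
  qed
qed (simp add: frob_sq_nonneg)

lemma skm_sampled_residual_bound:
  assumes \<omega>: "\<omega> \<in> space M" and T: "\<And>j. j \<in> T j"
    and "\<exists>i\<in>S k \<omega>. w k \<omega> = axis i 1 \<and>
      (\<forall>j\<in>S k \<omega>. \<bar>(A *v x k \<omega> - b) $ j\<bar> \<le> \<bar>(A *v x k \<omega> - b) $ i\<bar>)"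
  shows "(\<Sum>j\<in>UNIV. indicator {\<omega>\<in>space M. S k \<omega> = T j} \<omega> * ((A *v x k \<omega> - b) $ j)\<^sup>2)
      \<le> CARD('n) * (frob_sq A * (err k \<omega> - err (Suc k) \<omega>))"
proof (rule sum_bounded_above[where A=UNIV, simplified])
  obtain i where i: "w k \<omega> = axis i 1"
    and max: "\<forall>j\<in>S k \<omega>. \<bar>(A *v x k \<omega> - b) $ j\<bar> \<le> \<bar>(A *v x k \<omega> - b) $ i\<bar>"
    using assms(3) by blast
  show "indicator {\<omega>\<in>space M. S k \<omega> = T j} \<omega> * ((A *v x k \<omega> - b) $ j)\<^sup>2
      \<le> frob_sq A * (err k \<omega> - err (Suc k) \<omega>)" for j
  proof (cases "S k \<omega> = T j")
    case True
    with max T have "\<forall>j'\<in>S k \<omega>. \<bar>(A *v (x k \<omega> - p)) $ j'\<bar> \<le> \<bar>(A *v (x k \<omega> - p)) $ i\<bar>" "j \<in> S k \<omega>"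
      unfolding residual_eq by auto
    from component_sq_le_gain_of_max[OF this] show ?thesis
      using \<omega> True unfolding err_Suc[OF \<omega> i] residual_eq by simp
  next
    case False
    then show ?thesis using frob_sq_nonneg[of A] err_Suc_le[OF \<omega>] by simp
  qed
qed

lemma integral_sample_indicator_residual:
  assumes S_sets: "\<forall>k T. {\<omega>\<in>space M. S k \<omega> = T} \<in> sets (F (Suc k))"
    and S_uniform: "\<forall>k T. \<forall>B\<in>sets (F k). card T = \<psi> \<longrightarrow>
        measure M ({\<omega>\<in>space M. S k \<omega> = T} \<inter> B) = measure M B / real (CARD('n) choose \<psi>)"
    and "card T = \<psi>"
  shows "(\<integral>\<omega>. indicator {\<omega>\<in>space M. S k \<omega> = T} \<omega> * ((A *v x k \<omega> - b) $ j)\<^sup>2 \<partial>M)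
    = 1 / (CARD('n) choose \<psi>) * (\<integral>\<omega>. ((A *v x k \<omega> - b) $ j)\<^sup>2 \<partial>M)"
proof (rule integral_indicator_mult_independent[OF subalgebra_F])
  have "{\<omega>\<in>space M. S k \<omega> = T} \<in> sets (F (Suc k))" using S_sets by simp
  then show "{\<omega>\<in>space M. S k \<omega> = T} \<in> sets M"
    using subalgebra_F[of "Suc k"] by (auto simp: subalgebra_def)
  show "measure M ({\<omega>\<in>space M. S k \<omega> = T} \<inter> B) = 1 / (CARD('n) choose \<psi>) * measure M B"
    if "B \<in> sets (F k)" for B
    using S_uniform \<open>card T = \<psi>\<close> that by simp
  show "(\<lambda>\<omega>. ((A *v x k \<omega> - b) $ j)\<^sup>2) \<in> borel_measurable (F k)"
    using x_measurable_F[of k] by measurable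
qed simp_all

text \<open>Fix for every row j a sample T j of size \<psi> containing j. On the event that the sample
  is T j, the chosen row gains at least as much as row j would; that event has probability
  1 / (n choose \<psi>) independently of the past, so summing over j bounds the mean squared
  residual.\<close>
lemma skm_progress:
  assumes \<psi>: "1 \<le> \<psi>" "\<psi> \<le> CARD('n)"
    and S_sets: "\<forall>k T. {\<omega>\<in>space M. S k \<omega> = T} \<in> sets (F (Suc k))"
    and S_uniform: "\<forall>k T. \<forall>B\<in>sets (F k). card T = \<psi> \<longrightarrow>
        measure M ({\<omega>\<in>space M. S k \<omega> = T} \<inter> B) = measure M B / real (CARD('n) choose \<psi>)"
    and S_max: "\<forall>k. \<forall>\<omega>\<in>space M. \<exists>i\<in>S k \<omega>. w k \<omega> = axis i 1 \<and>
        (\<forall>j\<in>S k \<omega>. \<bar>(A *v x k \<omega> - b) $ j\<bar> \<le> \<bar>(A *v x k \<omega> - b) $ i\<bar>)"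
  shows "expected_progress ((CARD('n) choose \<psi>) * CARD('n) * frob_sq A)"
  unfolding expected_progress_def
proof (intro conjI allI)
  show "0 \<le> (CARD('n) choose \<psi>) * CARD('n) * frob_sq A" by (simp add: frob_sq_nonneg)
  fix k
  define N where "N = real (CARD('n) choose \<psi>)"
  have "0 < N" unfolding N_def using \<psi>(2) by (simp add: zero_less_binomial_iff)
  have "\<exists>T. \<forall>j::'n. j \<in> T j \<and> card (T j) = \<psi>"
    by (intro choice allI exists_subset_card_containing[OF \<psi>])
  then obtain T :: "'n \<Rightarrow> 'n set" where T: "\<And>j. j \<in> T j" "\<And>j. card (T j) = \<psi>" by blast
  define Q where "Q j = {\<omega>\<in>space M. S k \<omega> = T j}" for j
  define r where "r j \<omega> = ((A *v x k \<omega> - b) $ j)\<^sup>2" for j \<omega>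
  have integrable_Q_r: "integrable M (\<lambda>\<omega>. indicator (Q j) \<omega> * r j \<omega>)" for j
  proof -
    have "Q j \<in> sets M" using S_sets subalgebra_F[of "Suc k"] by (auto simp: Q_def subalgebra_def)
    from integrable_real_mult_indicator[OF this integrable_residual_component_sq]
    show ?thesis by (simp add: r_def mult.commute)
  qed
  have "(\<integral>\<omega>. (norm (A *v x k \<omega> - b))\<^sup>2 \<partial>M) / N = (\<Sum>j\<in>UNIV. 1 / N * (\<integral>\<omega>. r j \<omega> \<partial>M))"
  proof -
    have "(\<integral>\<omega>. (norm (A *v x k \<omega> - b))\<^sup>2 \<partial>M) = (\<Sum>j\<in>UNIV. \<integral>\<omega>. r j \<omega> \<partial>M)"
      unfolding norm_sq_eq_sum_components r_def
      by (rule Bochner_Integration.integral_sum) (rule integrable_residual_component_sq)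
    then show ?thesis by (simp add: sum_divide_distrib)
  qed
  also have "\<dots> = (\<Sum>j\<in>UNIV. \<integral>\<omega>. indicator (Q j) \<omega> * r j \<omega> \<partial>M)"
    unfolding Q_def r_def N_def
    by (intro sum.cong refl integral_sample_indicator_residual[symmetric, OF S_sets S_uniform T(2)])
  also have "\<dots> = (\<integral>\<omega>. (\<Sum>j\<in>UNIV. indicator (Q j) \<omega> * r j \<omega>) \<partial>M)"
    by (rule Bochner_Integration.integral_sum[symmetric]) (rule integrable_Q_r)
  also have "\<dots> \<le> (\<integral>\<omega>. CARD('n) * (frob_sq A * (err k \<omega> - err (Suc k) \<omega>)) \<partial>M)"
    unfolding Q_def r_def using T(1) S_max
    by (intro integral_mono skm_sampled_residual_bound Bochner_Integration.integrable_sum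
        integrable_Q_r[unfolded Q_def r_def] integrable_mult_right Bochner_Integration.integrable_diff
        integrable_err) auto
  also have "\<dots> = CARD('n) * frob_sq A * ((\<integral>\<omega>. err k \<omega> \<partial>M) - (\<integral>\<omega>. err (Suc k) \<omega> \<partial>M))"
    by (simp add: integrable_err)
  finally show "(\<integral>\<omega>. (norm (A *v x k \<omega> - b))\<^sup>2 \<partial>M)
      \<le> (CARD('n) choose \<psi>) * CARD('n) * frob_sq A * ((\<integral>\<omega>. err k \<omega> \<partial>M) - (\<integral>\<omega>. err (Suc k) \<omega> \<partial>M))"
    using \<open>0 < N\<close> unfolding N_def by (simp add: divide_le_eq mult_ac)
qed

lemma progress_of_generated_by:
  assumes "generated_by M F m A b x0 x w"
  shows "\<exists>C. expected_progress C"
proof (cases m)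
  case MaxResidual
  show ?thesis
    using assms unfolding generated_by_def MaxResidual adaptive_method.case
    by (elim conjE exE) (rule exI, rule max_residual_progress, assumption+)
next
  case MaxDistance
  show ?thesis
    using assms unfolding generated_by_def MaxDistance adaptive_method.case
    by (elim conjE) (rule max_distance_progress)
next
  case GRK
  show ?thesis
    using assms unfolding generated_by_def GRK adaptive_method.case
    by (elim conjE exE) (rule exI, rule grk_progress, assumption+)
next
  case (SKM \<psi>)
  show ?thesis
    using assms unfolding generated_by_def SKM adaptive_method.case
    by (elim conjE exE) (rule exI, rule skm_progress, assumption+)
qed

definition tau :: "real \<Rightarrow> nat \<Rightarrow> 'a \<Rightarrow> enat" where
  "tau \<rho> l = first_hitting_time err (\<rho>^l * (norm (x0 - p))\<^sup>2)"

lemma stopping_time_tau: "stopping_time (enat_filt M F) (tau \<rho> l)"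
  unfolding tau_def
proof (rule stopping_time_first_hitting_time)
  show "err (Suc j) \<omega> \<le> err j \<omega>" if "\<omega> \<in> space (F k)" for k j \<omega>
    using that subalgebra_F[of k] by (intro err_Suc_le) (simp add: subalgebra_def)
qed (rule measurable_err_F)

lemma mono_tau:
  assumes "0 \<le> \<rho>" "\<rho> \<le> 1" "\<omega> \<in> space M"
  shows "mono (\<lambda>l. tau \<rho> l \<omega>)"
  unfolding tau_def using assms
  by (intro monoI first_hitting_time_antimono err_Suc_le mult_right_mono power_decreasing) auto

lemma tau_0:
  assumes "\<omega> \<in> space M"
  shows "tau \<rho> 0 \<omega> = 0"
proof -
  have "tau \<rho> 0 \<omega> \<le> enat 0"
    unfolding tau_def using err_Suc_le[OF assms]
    by (subst first_hitting_time_le_iff) (simp_all add: err_def x_0[OF assms])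
  then show ?thesis by (simp add: enat_0)
qed

lemma err_Suc_at_tau:
  assumes "\<omega> \<in> space M" and "tau \<rho> l \<omega> = enat k"
  shows "err (Suc k) \<omega> \<le> \<rho>^l * (norm (x0 - p))\<^sup>2"
proof -
  have "err k \<omega> \<le> \<rho>^l * (norm (x0 - p))\<^sup>2"
    using assms(2) unfolding tau_def by (rule first_hitting_time_eq_enatD)
  then show ?thesis using err_Suc_le[OF assms(1), of k] by linarith
qed

lemma tau_finite_of_solution:
  assumes "\<omega> \<in> space M" and "0 \<le> \<rho>" and "x k \<omega> \<in> sol_set A b"
  shows "tau \<rho> l \<omega> \<noteq> \<infinity>"
proof -
  obtain \<sigma> where "0 < \<sigma>" and \<sigma>: "\<And>k \<omega>. \<omega> \<in> space M \<Longrightarrow> \<sigma> * err k \<omega> \<le> (norm (A *v x k \<omega> - b))\<^sup>2"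
    using residual_coercive by blast
  then have "err k \<omega> \<le> 0" using \<sigma>[OF assms(1), of k] assms(3) by (simp add: sol_set_def mult_le_0_iff)
  also have "0 \<le> \<rho>^l * (norm (x0 - p))\<^sup>2" using assms(2) by simp
  finally have "tau \<rho> l \<omega> \<le> enat k"
    unfolding tau_def using err_Suc_le[OF assms(1)] by (subst first_hitting_time_le_iff)
  then show ?thesis by (cases "tau \<rho> l \<omega>") auto
qed

context
  fixes \<rho> :: real
  assumes \<rho>: "0 < \<rho>" "\<rho> < 1"
    and contraction: "\<And>k. (\<integral>\<omega>. err (Suc k) \<omega> \<partial>M) \<le> \<rho> * (\<integral>\<omega>. err k \<omega> \<partial>M)"
begin

lemma expected_err_le: "(\<integral>\<omega>. err k \<omega> \<partial>M) \<le> \<rho>^k * (norm (x0 - p))\<^sup>2"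
proof (induction k)
  case 0
  have "(\<integral>\<omega>. err 0 \<omega> \<partial>M) = (\<integral>\<omega>. (norm (x0 - p))\<^sup>2 \<partial>M)"
    by (intro Bochner_Integration.integral_cong) (simp_all add: err_def x_0)
  then show ?case by (simp add: prob_space)
next
  case (Suc k)
  have "\<rho> * (\<integral>\<omega>. err k \<omega> \<partial>M) \<le> \<rho> * (\<rho>^k * (norm (x0 - p))\<^sup>2)"
    using Suc \<rho> by (intro mult_left_mono) auto
  then show ?case using contraction[of k] by (simp add: mult.assoc)
qed

lemma exceedance_sum_le: "(\<Sum>t. emeasure M {\<omega>\<in>space M. \<rho>^l * (norm (x0 - p))\<^sup>2 < err t \<omega>})
    \<le> ennreal (real l + 1 / (1 - \<rho>))"
  by (rule exceedance_sum_le_geometric[OF measurable_err err_nonneg err_le_err_0 expected_err_le \<rho>])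

lemma expected_tau_le: "(\<integral>\<^sup>+\<omega>. ennreal_of_enat (tau \<rho> l \<omega>) \<partial>M) \<le> ennreal (real l + 1 / (1 - \<rho>))"
  unfolding tau_def using nn_integral_first_hitting_time_le(1)[OF measurable_err] exceedance_sum_le
  by (rule order_trans)

lemma nn_integral_indicator_mult_tau_finite:
  "(\<integral>\<^sup>+\<omega>. indicator S \<omega> * ennreal_of_enat (tau \<rho> l \<omega>) \<partial>M) < \<infinity>"
proof -
  have "(\<integral>\<^sup>+\<omega>. indicator S \<omega> * ennreal_of_enat (tau \<rho> l \<omega>) \<partial>M) \<le> (\<integral>\<^sup>+\<omega>. ennreal_of_enat (tau \<rho> l \<omega>) \<partial>M)"
    by (intro nn_integral_mono) (simp split: split_indicator)
  then show ?thesis using expected_tau_le[of l] by (simp add: le_less_trans ennreal_less_top)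
qed

lemma expected_tau_linear: "\<exists>\<kappa>. \<forall>l. (\<integral>\<^sup>+\<omega>. ennreal_of_enat (tau \<rho> l \<omega>) \<partial>M) \<le> ennreal (real l * \<kappa>)"
proof (intro exI allI)
  fix l
  show "(\<integral>\<^sup>+\<omega>. ennreal_of_enat (tau \<rho> l \<omega>) \<partial>M) \<le> ennreal (real l * (1 + 1 / (1 - \<rho>)))"
  proof (cases "l = 0")
    case True
    then show ?thesis by (simp add: nn_integral_cong[of M _ "\<lambda>_. 0"] tau_0)
  next
    case False
    then have "real l + 1 / (1 - \<rho>) \<le> real l * (1 + 1 / (1 - \<rho>))"
      using \<rho> by (simp add: algebra_simps divide_right_mono)
    then show ?thesis using expected_tau_le[of l] by (meson ennreal_leI order_trans)
  qed
qed

lemma measure_tau_hits_or_converges: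
  "measure M ({\<omega>\<in>space M. \<exists>l. tau \<rho> l \<omega> \<noteq> \<infinity> \<and> x (the_enat (tau \<rho> l \<omega>) + 1) \<omega> \<in> sol_set A b} \<union>
     {\<omega>\<in>space M. \<forall>l. tau \<rho> l \<omega> \<noteq> \<infinity> \<and>
        (norm (x (the_enat (tau \<rho> l \<omega>) + 1) \<omega> - p))\<^sup>2 \<le> \<rho>^l * (norm (x0 - p))\<^sup>2}) = 1"
    (is "measure M (?E1 \<union> ?E2) = 1")
proof -
  define E where "E = {\<omega>\<in>space M. \<forall>l. tau \<rho> l \<omega> \<noteq> \<infinity>}"
  have "?E1 \<subseteq> E"
  proof
    fix \<omega> assume "\<omega> \<in> ?E1"
    then obtain l where "\<omega> \<in> space M" "x (the_enat (tau \<rho> l \<omega>) + 1) \<omega> \<in> sol_set A b" by blast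
    then show "\<omega> \<in> E" unfolding E_def using tau_finite_of_solution \<rho> by auto
  qed
  moreover have "?E2 = E"
  proof
    show "E \<subseteq> ?E2"
    proof
      fix \<omega> assume \<omega>: "\<omega> \<in> E"
      have "(norm (x (the_enat (tau \<rho> l \<omega>) + 1) \<omega> - p))\<^sup>2 \<le> \<rho>^l * (norm (x0 - p))\<^sup>2" for l
      proof -
        obtain k where "tau \<rho> l \<omega> = enat k" using \<omega> unfolding E_def by force
        with \<omega> show ?thesis using err_Suc_at_tau unfolding E_def err_def by simp
      qed
      then show "\<omega> \<in> ?E2" using \<omega> unfolding E_def by blast
    qed
  qed (auto simp: E_def)
  moreover have "E \<in> sets M"
    unfolding E_def tau_def first_hitting_time_def by simp measurable
  moreover have "AE \<omega> in M. \<forall>l. tau \<rho> l \<omega> \<noteq> \<infinity>"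
    unfolding AE_all_countable
  proof
    fix l
    have "(\<Sum>t. emeasure M {\<omega>\<in>space M. \<rho>^l * (norm (x0 - p))\<^sup>2 < err t \<omega>}) < \<infinity>"
      using le_less_trans[OF exceedance_sum_le ennreal_less_top] by simp
    then show "AE \<omega> in M. tau \<rho> l \<omega> \<noteq> \<infinity>"
      unfolding tau_def by (rule nn_integral_first_hitting_time_le(2)[OF measurable_err])
  qed
  ultimately show ?thesis unfolding E_def by (simp add: Un_absorb1 prob_Collect_eq_1)
qed

end

end

lemma kaczmarz_process_of_generated_by:
  assumes "\<exists>y. A *v y = b" and "generated_by M F m A b x0 x w"
  shows "kaczmarz_process M F A b x0 x w"
  using assms unfolding generated_by_def kaczmarz_process_def kaczmarz_process_axioms_def by blast

theorem mainTheorem17: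
  fixes M :: "'a measure" and F :: "nat \<Rightarrow> 'a measure" and m :: adaptive_method
    and A :: "real^'d^'n" and b :: "real^'n" and x0 :: "real^'d"
    and x :: "nat \<Rightarrow> 'a \<Rightarrow> real^'d" and w :: "nat \<Rightarrow> 'a \<Rightarrow> real^'n"
  assumes consistent: "\<exists>xs. A *v xs = b"
    and gen: "generated_by M F m A b x0 x w"
  shows "\<exists>\<gamma>::real. 0 \<le> \<gamma> \<and> \<gamma> < 1 \<and>
    (\<exists>\<tau> :: nat \<Rightarrow> 'a \<Rightarrow> enat.
       (\<forall>l. stopping_time (enat_filt M F) (\<tau> l)) \<and>
       (\<forall>\<omega>\<in>space M. mono (\<lambda>l. \<tau> l \<omega>)) \<and>
       (let H = sol_set A b; p = closest_point (sol_set A b) x0;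
            E1 = {\<omega>\<in>space M. \<exists>l. \<tau> l \<omega> \<noteq> \<infinity> \<and> x (the_enat (\<tau> l \<omega>) + 1) \<omega> \<in> H};
            E2 = {\<omega>\<in>space M. \<forall>l. \<tau> l \<omega> \<noteq> \<infinity> \<and>
                    (norm (x (the_enat (\<tau> l \<omega>) + 1) \<omega> - p))\<^sup>2 \<le> \<gamma> ^ l * (norm (x0 - p))\<^sup>2}
        in measure M (E1 \<union> E2) = 1 \<and>
           (\<forall>l. (\<integral>\<^sup>+\<omega>. indicator {\<omega>\<in>space M. \<tau> l \<omega> \<noteq> \<infinity> \<and>
                                   x (the_enat (\<tau> l \<omega>) + 1) \<omega> \<in> H} \<omega>
                         * ennreal_of_enat (\<tau> l \<omega>) \<partial>M) < \<infinity>) \<and>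
           (\<forall>l. (\<integral>\<^sup>+\<omega>. indicator E2 \<omega> * ennreal_of_enat (\<tau> l \<omega>) \<partial>M) < \<infinity>)) \<and>
       (\<exists>\<kappa>::real. \<forall>l. (AE \<omega> in M. \<tau> l \<omega> \<noteq> \<infinity>) \<longrightarrow>
            (\<integral>\<^sup>+\<omega>. ennreal_of_enat (\<tau> l \<omega>) \<partial>M) \<le> ennreal (real l * \<kappa>)))"
proof -
  interpret kaczmarz_process M F A b x0 x w
    using consistent gen by (rule kaczmarz_process_of_generated_by)
  obtain C where "expected_progress C" using progress_of_generated_by[OF gen] by blast
  then obtain \<rho> where \<rho>: "0 < \<rho>" "\<rho> < 1"
    and contraction: "\<And>k. (\<integral>\<omega>. err (Suc k) \<omega> \<partial>M) \<le> \<rho> * (\<integral>\<omega>. err k \<omega> \<partial>M)"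
    using expected_contraction by blast
  show ?thesis
    unfolding Let_def p_def[symmetric]
  proof (rule exI[of _ \<rho>], intro conjI exI[of _ "tau \<rho>"] allI ballI)
    show "0 \<le> \<rho>" "\<rho> < 1" using \<rho> by auto
    show "stopping_time (enat_filt M F) (tau \<rho> l)" for l by (rule stopping_time_tau)
    show "mono (\<lambda>l. tau \<rho> l \<omega>)" if "\<omega> \<in> space M" for \<omega> using \<rho> that by (intro mono_tau) auto
    \<comment> \<open>The bound holds for every l.\<close>
    show "\<exists>\<kappa>. \<forall>l. (AE \<omega> in M. tau \<rho> l \<omega> \<noteq> \<infinity>) \<longrightarrow>
        (\<integral>\<^sup>+\<omega>. ennreal_of_enat (tau \<rho> l \<omega>) \<partial>M) \<le> ennreal (real l * \<kappa>)"
      using expected_tau_linear[OF \<rho> contraction] by blast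
  qed (rule measure_tau_hits_or_converges[OF \<rho> contraction] nn_integral_indicator_mult_tau_finite[OF \<rho> contraction])+
qed

end
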